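(* There exist a rational polyhedron $P=\{x\in\mathbb{R}^n: Ax\le b,\ 0\le x_i\le u_i \text{ for } i\in I\}$, with $I=\{1,\dots,l\}$ the index set of integer variables, and a binarization scheme $\mathcal{B}=(B^1,\dots,B^l)$ in which every $B^i$ is a non-affine binarization polytope, such that \[\mathrm{SC}(P,I)\subsetneq\operatorname{proj}_x\big(\mathrm{SC}(P_{\mathcal{B}},I')\big),\qquad\text{where } I'=I_{\mathcal{B}}\setminus I.\]
   Context: Binarization polytopes: for positive integers $q,u$, $\Gamma^q_u$ is the set of rational polytopes $B\subseteq\{(x,z)\in\mathbb{R}\times[0,1]^q:0\le x\le u\}$ with $\operatorname{proj}_x(B\cap(\mathbb{R}\times\{0,1\}^q))=\{0,1,\dots,u\}$. $B\in\Gamma^q_u$ is affine if there are $\alpha\in\mathbb{R}^q$, $\alpha_0\in\mathbb{R}$ with $x=\alpha^Tz+\alpha_0$ for all $(x,z)\in B$. A binarization scheme is $\mathcal{B}=(B^1,\dots,B^l)$ with $B^i\in\Gamma^{q_i}_{u_i}$; with $q=\sum_iq_i$, $P_{\mathcal{B}}=\{(x,z)\in\mathbb{R}^n\times\mathbb{R}^q: x\in P,\ (x_i,z_i)\in B^i\text{ for } i\in I\}$ where $z=(z_1,\dots,z_l)$, $z_i\in\mathbb{R}^{q_i}$, and $I_{\mathcal{B}}=\{1,\dots,l,n+1,\dots,n+q\}$; thus $I'=\{n+1,\dots,n+q\}$ indexes only the new variables. Split closure: for $J\subseteq\{1,\dots,N\}$ and $X\subseteq\mathbb{R}^N$, $\mathrm{SC}(X,J)=\bigcap\mathrm{conv}(X\setminus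 S)$ over all $S=\{y:\pi_0<\pi^Ty<\pi_0+1\}$ with $\pi\in\mathbb{Z}^N$, $\pi_j=0$ for $j\notin J$, $\pi_0\in\mathbb{Z}$. $\operatorname{proj}_x$ is orthogonal projection onto the $x$-coordinates. *)

theory Defs
  imports "HOL-Analysis.Analysis"
begin

text \<open>Conventions. A point of R^N is encoded as a function y :: nat => real whose
coordinates are y 1, ..., y N (1-indexed, as in the paper); all other values are 0.\<close>

definition Rn :: "nat \<Rightarrow> (nat \<Rightarrow> real) set" where
  "Rn N = {y. \<forall>j. (j = 0 \<or> N < j) \<longrightarrow> y j = 0}"

definition conv :: "(nat \<Rightarrow> real) set \<Rightarrow> (nat \<Rightarrow> real) set" where
  "conv X = {y. \<exists>S c. finite S \<and> S \<subseteq> X \<and> (\<forall>x\<in>S. 0 \<le> c x) \<and> sum c S = 1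
                  \<and> y = (\<lambda>j. \<Sum>x\<in>S. c x * x j)}"

definition split_closure :: "nat \<Rightarrow> (nat \<Rightarrow> real) set \<Rightarrow> nat set \<Rightarrow> (nat \<Rightarrow> real) set" where
  "split_closure N X J =
     (\<Inter>{conv (X - {y. real_of_int \<pi>0 < (\<Sum>j=1..N. real_of_int (\<pi> j) * y j)
                        \<and> (\<Sum>j=1..N. real_of_int (\<pi> j) * y j) < real_of_int \<pi>0 + 1})
        | \<pi> \<pi>0. \<forall>j\<in>{1..N}. j \<notin> J \<longrightarrow> \<pi> j = 0})"

definition proj :: "nat \<Rightarrow> (nat \<Rightarrow> real) set \<Rightarrow> (nat \<Rightarrow> real) set" where
  "proj n Y = (\<lambda>y. \<lambda>j. if 1 \<le> j \<and> j \<le> n then y j else 0) ` Y"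

definition rational_polytope :: "nat \<Rightarrow> (nat \<Rightarrow> real) set \<Rightarrow> bool" where
  "rational_polytope N B \<longleftrightarrow>
     (\<exists>V. finite V \<and> V \<subseteq> Rn N \<and> (\<forall>v\<in>V. \<forall>j. v j \<in> \<rat>) \<and> B = conv V)"

text \<open>Binarization polytopes Gamma^q_u, in R^(1+q): coordinate 1 is x,
coordinates 2..q+1 are z_1..z_q.\<close>
definition binarization_polytope :: "nat \<Rightarrow> nat \<Rightarrow> (nat \<Rightarrow> real) set \<Rightarrow> bool" where
  "binarization_polytope q u B \<longleftrightarrow>
     rational_polytope (q + 1) B \<and>
     B \<subseteq> {y \<in> Rn (q + 1). 0 \<le> y 1 \<and> y 1 \<le> real u \<and> (\<forall>j\<in>{2..q+1}. 0 \<le> y j \<and> y j \<le> 1)} \<and>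
     (\<lambda>y. y 1) ` {y \<in> B. \<forall>j\<in>{2..q+1}. y j \<in> {0, 1}} = real ` {0..u}"

definition affine_binarization :: "nat \<Rightarrow> (nat \<Rightarrow> real) set \<Rightarrow> bool" where
  "affine_binarization q B \<longleftrightarrow>
     (\<exists>\<alpha> :: nat \<Rightarrow> real. \<exists>\<alpha>0 :: real. \<forall>y\<in>B. y 1 = (\<Sum>j=1..q. \<alpha> j * y (j + 1)) + \<alpha>0)"

definition polyhedron_P :: "nat \<Rightarrow> nat \<Rightarrow> (nat \<Rightarrow> nat) \<Rightarrow> nat \<Rightarrow> (nat \<Rightarrow> nat \<Rightarrow> real)
      \<Rightarrow> (nat \<Rightarrow> real) \<Rightarrow> (nat \<Rightarrow> real) set" where
  "polyhedron_P n l u m A b =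
     {x \<in> Rn n. (\<forall>k\<in>{1..m}. (\<Sum>j=1..n. A k j * x j) \<le> b k)
              \<and> (\<forall>i\<in>{1..l}. 0 \<le> x i \<and> x i \<le> real (u i))}"

text \<open>Offset: z_i occupies coordinates off+1 .. off+q_i with off = n + q_1 + ... + q_(i-1).\<close>
definition zoff :: "nat \<Rightarrow> (nat \<Rightarrow> nat) \<Rightarrow> nat \<Rightarrow> nat" where
  "zoff n q i = n + (\<Sum>k\<in>{1..<i}. q k)"

definition total_q :: "nat \<Rightarrow> (nat \<Rightarrow> nat) \<Rightarrow> nat" where
  "total_q l q = (\<Sum>k\<in>{1..l}. q k)"

definition pair_i :: "nat \<Rightarrow> (nat \<Rightarrow> nat) \<Rightarrow> nat \<Rightarrow> (nat \<Rightarrow> real) \<Rightarrow> (nat \<Rightarrow> real)" where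
  "pair_i n q i y = (\<lambda>j. if j = 1 then y i
                          else if 2 \<le> j \<and> j \<le> q i + 1 then y (zoff n q i + (j - 1)) else 0)"

definition binarized :: "nat \<Rightarrow> nat \<Rightarrow> (nat \<Rightarrow> nat) \<Rightarrow> (nat \<Rightarrow> (nat \<Rightarrow> real) set)
      \<Rightarrow> (nat \<Rightarrow> real) set \<Rightarrow> (nat \<Rightarrow> real) set" where
  "binarized n l q B P =
     {y \<in> Rn (n + total_q l q). proj n {y} \<subseteq> P \<and> (\<forall>i\<in>{1..l}. pair_i n q i y \<in> B i)}"

definition I_B :: "nat \<Rightarrow> nat \<Rightarrow> (nat \<Rightarrow> nat) \<Rightarrow> nat set" where
  "I_B n l q = {1..l} \<union> {n+1..n + total_q l q}"

end

theory Submission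
  imports Defs
begin

text \<open>Take \<open>P = {1/2}\<close> inside \<open>[0,1]\<close>: the split \<open>0 < x < 1\<close> removes all of \<open>P\<close>, so
\<open>SC(P, I)\<close> is empty. Binarize \<open>x\<close> by the tetrahedron \<open>B\<close> spanned by the points
\<open>(z\<^sub>1 xor z\<^sub>2, z\<^sub>1, z\<^sub>2)\<close>, \<open>z \<in> {0,1}\<^sup>2\<close>; its slice \<open>x = 1/2\<close> contains the centre
\<open>c = (1/2, 1/2, 1/2)\<close> and the edge midpoints \<open>c \<plusminus> e\<^sub>k/2\<close> (\<open>k = 2, 3\<close>). If the strip of a split
\<open>\<pi>\<close> on the \<open>z\<close>-coordinates contains \<open>c\<close>, then \<open>\<pi>(c) = (\<pi>\<^sub>2 + \<pi>\<^sub>3)/2\<close> lies strictly between consecutive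
integers, so \<open>\<pi>\<^sub>2 + \<pi>\<^sub>3\<close> is odd and some \<open>\<pi>\<^sub>k \<noteq> 0\<close>; the points \<open>c \<plusminus> e\<^sub>k/2\<close> have \<open>\<pi>\<close>-values at distance \<open>\<bar>\<pi>\<^sub>k\<bar>/2 \<ge> 1/2\<close> from \<open>\<pi>(c)\<close>,
outside the open strip. Their midpoint \<open>c\<close> therefore survives every split.\<close>

lemma conv_empty [simp]: "conv {} = {}"
  unfolding conv_def by auto

lemma barycentre_in_conv:
  assumes "finite S" "S \<noteq> {}" "S \<subseteq> X"
  shows "(\<lambda>j. (\<Sum>x\<in>S. x j) / card S) \<in> conv X"
proof -
  have "(\<lambda>j. (\<Sum>x\<in>S. x j) / card S) = (\<lambda>j. \<Sum>x\<in>S. 1 / card S * x j)"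
    by (simp add: sum_divide_distrib)
  moreover have "sum (\<lambda>_. 1 / real (card S)) S = 1"
    using assms by simp
  ultimately show ?thesis
    unfolding conv_def using assms by (intro CollectI exI[of _ S] exI[of _ "\<lambda>_. 1 / card S"]) auto
qed

lemma subset_conv: "X \<subseteq> conv X"
proof
  fix a assume "a \<in> X"
  then show "a \<in> conv X"
    using barycentre_in_conv[of "{a}" X] by simp
qed

lemma midpoint_in_conv:
  assumes "a \<in> X" "b \<in> X"
  shows "(\<lambda>j. (a j + b j) / 2) \<in> conv X"
proof (cases "a = b")
  case True
  then show ?thesis using assms subset_conv by auto
next
  case False
  then show ?thesis using assms barycentre_in_conv[of "{a, b}" X] by simp
qed

lemma conv_Rn: "X \<subseteq> Rn N \<Longrightarrow> conv X \<subseteq> Rn N"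
  unfolding conv_def Rn_def by (auto intro!: sum.neutral)

lemma conv_halfspace:
  assumes "\<forall>x\<in>X. (\<Sum>j\<in>J. a j * x j) \<le> (\<beta>::real)" and "y \<in> conv X"
  shows "(\<Sum>j\<in>J. a j * y j) \<le> \<beta>"
proof -
  obtain S c where S: "finite S" "S \<subseteq> X" "\<forall>x\<in>S. 0 \<le> c x" "sum c S = 1"
    and y: "y = (\<lambda>j. \<Sum>x\<in>S. c x * x j)"
    using assms(2) unfolding conv_def by blast
  have "(\<Sum>j\<in>J. a j * y j) = (\<Sum>x\<in>S. c x * (\<Sum>j\<in>J. a j * x j))"
    unfolding y by (simp add: sum_distrib_left algebra_simps sum.swap[of _ J])
  also have "\<dots> \<le> (\<Sum>x\<in>S. c x * \<beta>)"
    using S assms(1) by (intro sum_mono mult_left_mono) auto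
  also have "\<dots> = \<beta>"
    using S(4) by (simp add: sum_distrib_right[symmetric])
  finally show ?thesis .
qed

definition pt3 :: "real \<Rightarrow> real \<Rightarrow> real \<Rightarrow> nat \<Rightarrow> real" where
  "pt3 x z1 z2 = (\<lambda>j. if j = 1 then x else if j = 2 then z1 else if j = 3 then z2 else 0)"

lemma pt3_simps [simp]:
  "pt3 x z1 z2 1 = x" "pt3 x z1 z2 2 = z1" "pt3 x z1 z2 3 = z2"
  "pt3 x z1 z2 0 = 0" "pt3 x z1 z2 (Suc 0) = x" "3 < j \<Longrightarrow> pt3 x z1 z2 j = 0"
  by (auto simp: pt3_def)

lemma pt3_eq_iff: "pt3 x z1 z2 = pt3 x' z1' z2' \<longleftrightarrow> x = x' \<and> z1 = z1' \<and> z2 = z2'"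
  by (metis pt3_simps(1-3))

lemma pt3_in_Rn: "pt3 x z1 z2 \<in> Rn 3"
  by (auto simp: Rn_def)

lemma pt3_midpoint:
  "(\<lambda>j. (pt3 x z1 z2 j + pt3 x' z1' z2' j) / 2) = pt3 ((x + x') / 2) ((z1 + z1') / 2) ((z2 + z2') / 2)"
  by (auto simp: pt3_def)

definition xor_vertices :: "(nat \<Rightarrow> real) set" where
  "xor_vertices = {pt3 0 0 0, pt3 0 1 1, pt3 1 1 0, pt3 1 0 1}"

definition xor_polytope :: "(nat \<Rightarrow> real) set" where
  "xor_polytope = conv xor_vertices"

lemma xor_vertices_in_polytope: "xor_vertices \<subseteq> xor_polytope"
  unfolding xor_polytope_def by (rule subset_conv)

lemma xor_polytope_halfspace:
  assumes "\<forall>v\<in>xor_vertices. a1 * v 1 + a2 * v 2 + a3 * v 3 \<le> \<beta>" and "y \<in> xor_polytope"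
  shows "a1 * y 1 + a2 * y 2 + a3 * y 3 \<le> \<beta>"
proof -
  let ?a = "\<lambda>j. if j = 1 then a1 else if j = 2 then a2 else a3"
  have sum3: "(\<Sum>j\<in>{1, 2, 3}. ?a j * v j) = a1 * v 1 + a2 * v 2 + a3 * v 3" for v :: "nat \<Rightarrow> real"
    by simp
  show ?thesis
    using conv_halfspace[where X = xor_vertices and J = "{1, 2, 3}" and a = ?a] assms
    unfolding xor_polytope_def sum3 by blast
qed

lemma xor_polytope_box:
  assumes "y \<in> xor_polytope"
  shows "0 \<le> y 1" "y 1 \<le> 1" "0 \<le> y 2" "y 2 \<le> 1" "0 \<le> y 3" "y 3 \<le> 1"
  using xor_polytope_halfspace[OF _ assms, of "-1" 0 0 0] xor_polytope_halfspace[OF _ assms, of 1 0 0 1]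
    xor_polytope_halfspace[OF _ assms, of 0 "-1" 0 0] xor_polytope_halfspace[OF _ assms, of 0 1 0 1]
    xor_polytope_halfspace[OF _ assms, of 0 0 "-1" 0] xor_polytope_halfspace[OF _ assms, of 0 0 1 1]
  by (simp_all add: xor_vertices_def)

lemma xor_polytope_binary_point:
  assumes "y \<in> xor_polytope" "y 2 \<in> {0, 1}" "y 3 \<in> {0, 1}"
  shows "y 1 = \<bar>y 2 - y 3\<bar>"
  using xor_polytope_halfspace[OF _ assms(1), of "-1" 1 "-1" 0]
    xor_polytope_halfspace[OF _ assms(1), of "-1" "-1" 1 0]
    xor_polytope_halfspace[OF _ assms(1), of 1 "-1" "-1" 0]
    xor_polytope_halfspace[OF _ assms(1), of 1 1 1 2] assms(2,3)
  by (auto simp: xor_vertices_def)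

lemma xor_polytope_binarizes: "binarization_polytope 2 1 xor_polytope"
proof -
  have rational: "rational_polytope 3 xor_polytope"
    unfolding rational_polytope_def xor_polytope_def
    by (rule exI[of _ xor_vertices]) (simp add: xor_vertices_def pt3_in_Rn, auto simp: pt3_def)
  have Rn: "xor_polytope \<subseteq> Rn 3"
    unfolding xor_polytope_def by (rule conv_Rn) (auto simp: xor_vertices_def pt3_in_Rn)
  have coords: "{2..2 + 1 :: nat} = {2, 3}" and unit_range: "{0..1 :: nat} = {0, 1}"
    by auto
  have binary_x: "(\<lambda>y. y 1) ` {y \<in> xor_polytope. \<forall>j\<in>{2..2 + 1}. y j \<in> {0, 1}} = real ` {0..1}"
  proof
    show "(\<lambda>y. y 1) ` {y \<in> xor_polytope. \<forall>j\<in>{2..2 + 1}. y j \<in> {0, 1}} \<subseteq> real ` {0..1}"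
      using xor_polytope_binary_point unfolding coords by (force simp: image_iff)
    have "pt3 0 0 0 \<in> xor_polytope" "pt3 1 1 0 \<in> xor_polytope"
      using xor_vertices_in_polytope by (auto simp: xor_vertices_def)
    then show "real ` {0..1} \<subseteq> (\<lambda>y. y 1) ` {y \<in> xor_polytope. \<forall>j\<in>{2..2 + 1}. y j \<in> {0, 1}}"
      unfolding coords unit_range
      using image_eqI[of 0 "\<lambda>y. y 1" "pt3 0 0 0"] image_eqI[of 1 "\<lambda>y. y 1" "pt3 1 1 0"] by auto
  qed
  show ?thesis
    using rational Rn binary_x xor_polytope_box
    unfolding binarization_polytope_def coords by auto
qed

lemma xor_polytope_not_affine: "\<not> affine_binarization 2 xor_polytope"
proof
  assume "affine_binarization 2 xor_polytope"
  then obtain \<alpha> \<alpha>0 where "\<forall>y\<in>xor_polytope. y 1 = (\<Sum>j=1..2. \<alpha> j * y (j + 1)) + \<alpha>0"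
    unfolding affine_binarization_def by blast
  then have "\<forall>v\<in>xor_vertices. v 1 = \<alpha> 1 * v 2 + \<alpha> 2 * v 3 + \<alpha>0"
    using xor_vertices_in_polytope by (auto simp: numeral_2_eq_2 numeral_3_eq_3)
  then show False
    by (simp add: xor_vertices_def) linarith
qed

lemma xor_polytope_edge_midpoints:
  "pt3 (1/2) 0 (1/2) \<in> xor_polytope" "pt3 (1/2) 1 (1/2) \<in> xor_polytope"
  "pt3 (1/2) (1/2) 0 \<in> xor_polytope" "pt3 (1/2) (1/2) 1 \<in> xor_polytope"
  using midpoint_in_conv[of "pt3 0 0 0" xor_vertices "pt3 1 0 1"]
    midpoint_in_conv[of "pt3 0 1 1" xor_vertices "pt3 1 1 0"]
    midpoint_in_conv[of "pt3 0 0 0" xor_vertices "pt3 1 1 0"]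
    midpoint_in_conv[of "pt3 0 1 1" xor_vertices "pt3 1 0 1"]
  unfolding pt3_midpoint xor_polytope_def by (simp_all add: xor_vertices_def)

lemma xor_polytope_centre: "pt3 (1/2) (1/2) (1/2) \<in> xor_polytope"
proof -
  have "(\<lambda>j. (\<Sum>v\<in>xor_vertices. v j) / card xor_vertices) = pt3 (1/2) (1/2) (1/2)"
    by (simp add: xor_vertices_def pt3_eq_iff) (auto simp: pt3_def)
  then show ?thesis
    using barycentre_in_conv[of xor_vertices xor_vertices]
    unfolding xor_polytope_def by (simp add: xor_vertices_def)
qed

definition split_strip :: "nat \<Rightarrow> (nat \<Rightarrow> int) \<Rightarrow> int \<Rightarrow> (nat \<Rightarrow> real) set" where
  "split_strip N \<pi> \<pi>0 = {y. real_of_int \<pi>0 < (\<Sum>j=1..N. real_of_int (\<pi> j) * y j)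
                            \<and> (\<Sum>j=1..N. real_of_int (\<pi> j) * y j) < real_of_int \<pi>0 + 1}"

lemma split_closure_subset_conv:
  assumes "\<forall>j\<in>{1..N}. j \<notin> J \<longrightarrow> \<pi> j = 0"
  shows "split_closure N X J \<subseteq> conv (X - split_strip N \<pi> \<pi>0)"
  unfolding split_closure_def split_strip_def using assms by blast

lemma split_closureI:
  assumes "\<And>\<pi> \<pi>0. \<forall>j\<in>{1..N}. j \<notin> J \<longrightarrow> \<pi> j = 0 \<Longrightarrow> y \<in> conv (X - split_strip N \<pi> \<pi>0)"
  shows "y \<in> split_closure N X J"
  unfolding split_closure_def using assms unfolding split_strip_def by blast

lemma split_closure_empty:
  assumes "\<forall>j\<in>{1..N}. j \<notin> J \<longrightarrow> \<pi> j = 0" and "X \<subseteq> split_strip N \<pi> \<pi>0"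
  shows "split_closure N X J = {}"
  using split_closure_subset_conv[OF assms(1), of X \<pi>0] assms(2)
  by (metis Diff_eq_empty_iff conv_empty subset_empty)

lemma half_in_split_strip_iff:
  fixes a p :: int
  shows "real_of_int p < real_of_int a / 2 \<and> real_of_int a / 2 < real_of_int p + 1 \<longleftrightarrow> a = 2 * p + 1"
proof -
  have "real_of_int p < real_of_int a / 2 \<longleftrightarrow> 2 * p < a"
    by linarith
  moreover have "real_of_int a / 2 < real_of_int p + 1 \<longleftrightarrow> a < 2 * p + 2"
    by linarith
  ultimately show ?thesis
    by presburger
qed

definition P_half :: "(nat \<Rightarrow> real) set" where
  "P_half = polyhedron_P 1 1 (\<lambda>_. 1) 2 (\<lambda>k j. if k = 1 then 1 else -1) (\<lambda>k. if k = 1 then 1/2 else -1/2)"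

lemma P_half_coordinate:
  assumes "x \<in> P_half"
  shows "x 1 = 1/2"
proof -
  have "\<forall>k\<in>{1..2::nat}. (\<Sum>j=1..1. (if k = 1 then 1 else -1) * x j) \<le> (if k = 1 then 1/2 else -1/2)"
    using assms unfolding P_half_def polyhedron_P_def by blast
  from this[rule_format, of 1] this[rule_format, of 2] show ?thesis
    by simp
qed

lemma split_closure_P_half: "split_closure 1 P_half {1..1} = {}"
proof (rule split_closure_empty)
  show "P_half \<subseteq> split_strip 1 (\<lambda>_. 1) 0"
    unfolding split_strip_def by (auto dest: P_half_coordinate)
qed simp

abbreviation xor_binarized :: "(nat \<Rightarrow> real) set" where
  "xor_binarized \<equiv> binarized 1 1 (\<lambda>_. 2) (\<lambda>_. xor_polytope) P_half"

lemma xor_binarized_dimension: "1 + total_q 1 (\<lambda>_. 2) = 3"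
  by (simp add: total_q_def)

lemma xor_slice_in_binarized:
  assumes "pt3 (1/2) z1 z2 \<in> xor_polytope"
  shows "pt3 (1/2) z1 z2 \<in> xor_binarized"
proof -
  have "proj 1 {pt3 (1/2) z1 z2} = {\<lambda>j. if j = 1 then 1/2 else 0}"
    unfolding proj_def by (auto simp: pt3_def)
  moreover have "(\<lambda>j. if j = 1 then 1/2 else 0 :: real) \<in> P_half"
    unfolding P_half_def polyhedron_P_def by (auto simp: Rn_def)
  moreover have "pair_i 1 (\<lambda>_. 2) 1 (pt3 (1/2) z1 z2) = pt3 (1/2) z1 z2"
    by (auto simp: pair_i_def zoff_def pt3_def)
  moreover have "pt3 (1/2) z1 z2 \<in> Rn (1 + total_q 1 (\<lambda>_. 2))"
    unfolding xor_binarized_dimension by (rule pt3_in_Rn)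
  ultimately show ?thesis
    unfolding binarized_def using assms by auto
qed

lemma xor_centre_in_split_closure:
  "pt3 (1/2) (1/2) (1/2) \<in> split_closure 3 xor_binarized {2..3}"
proof (rule split_closureI)
  fix \<pi> :: "nat \<Rightarrow> int" and \<pi>0 :: int
  assume "\<forall>j\<in>{1..3}. j \<notin> {2..3} \<longrightarrow> \<pi> j = 0"
  then have "\<pi> 1 = 0"
    by auto
  define S where "S = split_strip 3 \<pi> \<pi>0"
  have "{1..3::nat} = {1, 2, 3}"
    by auto
  then have "(\<Sum>j=1..3. real_of_int (\<pi> j) * pt3 x z1 z2 j) = \<pi> 2 * z1 + \<pi> 3 * z2" for x z1 z2 :: real
    using \<open>\<pi> 1 = 0\<close> by simp
  then have on_half_grid: "pt3 x z1 z2 \<in> S \<longleftrightarrow> a = 2 * \<pi>0 + 1"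
    if "2 * (\<pi> 2 * z1 + \<pi> 3 * z2) = real_of_int a" for x z1 z2 :: real and a :: int
    using half_in_split_strip_iff[of \<pi>0 a] that unfolding S_def split_strip_def by auto
  have pair: "pt3 (1/2) ((z1 + z1') / 2) ((z2 + z2') / 2) \<in> conv (xor_binarized - S)"
    if "pt3 (1/2) z1 z2 \<in> xor_polytope" "pt3 (1/2) z1' z2' \<in> xor_polytope"
      "pt3 (1/2) z1 z2 \<notin> S" "pt3 (1/2) z1' z2' \<notin> S" for z1 z2 z1' z2'
    using midpoint_in_conv[of "pt3 (1/2) z1 z2" "xor_binarized - S" "pt3 (1/2) z1' z2'"]
      xor_slice_in_binarized that
    by (simp add: pt3_midpoint)
  show "pt3 (1/2) (1/2) (1/2) \<in> conv (xor_binarized - S)"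
  proof (cases "pt3 (1/2) (1/2) (1/2) \<in> S")
    case False
    then show ?thesis
      using xor_slice_in_binarized[OF xor_polytope_centre] subset_conv by blast
  next
    case True
    then have odd: "\<pi> 2 + \<pi> 3 = 2 * \<pi>0 + 1"
      using on_half_grid[of "1/2" "1/2" "\<pi> 2 + \<pi> 3"] by simp
    then have "\<pi> 2 \<noteq> 0 \<or> \<pi> 3 \<noteq> 0"
      by presburger
    then consider "\<pi> 2 \<noteq> 0" | "\<pi> 3 \<noteq> 0"
      by blast
    then show ?thesis
    proof cases
      case 1
      then have "pt3 (1/2) 0 (1/2) \<notin> S" "pt3 (1/2) 1 (1/2) \<notin> S"
        using odd on_half_grid[of 0 "1/2" "\<pi> 3"] on_half_grid[of 1 "1/2" "2 * \<pi> 2 + \<pi> 3"] by auto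
      then show ?thesis
        using pair[of 0 "1/2" 1 "1/2"] xor_polytope_edge_midpoints by simp
    next
      case 2
      then have "pt3 (1/2) (1/2) 0 \<notin> S" "pt3 (1/2) (1/2) 1 \<notin> S"
        using odd on_half_grid[of "1/2" 0 "\<pi> 2"] on_half_grid[of "1/2" 1 "\<pi> 2 + 2 * \<pi> 3"] by auto
      then show ?thesis
        using pair[of "1/2" 0 "1/2" 1] xor_polytope_edge_midpoints by simp
    qed
  qed
qed

theorem proposition1:
  shows "\<exists>(n::nat) (l::nat) (u::nat \<Rightarrow> nat) (m::nat) (A::nat \<Rightarrow> nat \<Rightarrow> real) (b::nat \<Rightarrow> real)
            (q::nat \<Rightarrow> nat) (B::nat \<Rightarrow> (nat \<Rightarrow> real) set).
     1 \<le> l \<and> l \<le> n \<and>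
     (\<forall>k\<in>{1..m}. b k \<in> \<rat> \<and> (\<forall>j\<in>{1..n}. A k j \<in> \<rat>)) \<and>
     (\<forall>i\<in>{1..l}. 0 < u i \<and> 0 < q i \<and> binarization_polytope (q i) (u i) (B i)
                  \<and> \<not> affine_binarization (q i) (B i)) \<and>
     split_closure n (polyhedron_P n l u m A b) {1..l}
       \<subset> proj n (split_closure (n + total_q l q)
                   (binarized n l q B (polyhedron_P n l u m A b))
                   (I_B n l q - {1..l}))"
proof -
  let ?A = "\<lambda>k j. if k = 1 then 1 else -1 :: real"
  let ?b = "\<lambda>k. if k = 1 then 1/2 else -1/2 :: real"
  have "I_B 1 1 (\<lambda>_. 2) - {1..1} = {2..3}"
    using xor_binarized_dimension by (auto simp: I_B_def)
  then have "proj 1 (split_closure (1 + total_q 1 (\<lambda>_. 2)) xor_binarized (I_B 1 1 (\<lambda>_. 2) - {1..1})) \<noteq> {}"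
    using xor_centre_in_split_closure unfolding xor_binarized_dimension proj_def by auto
  then have strict: "split_closure 1 P_half {1..1}
      \<subset> proj 1 (split_closure (1 + total_q 1 (\<lambda>_. 2)) xor_binarized (I_B 1 1 (\<lambda>_. 2) - {1..1}))"
    using split_closure_P_half by auto
  show ?thesis
    by (rule exI[of _ 1], rule exI[of _ 1], rule exI[of _ "\<lambda>_. 1"], rule exI[of _ 2],
        rule exI[of _ ?A], rule exI[of _ ?b], rule exI[of _ "\<lambda>_. 2"],
        rule exI[of _ "\<lambda>_. xor_polytope"])
      (use strict xor_polytope_binarizes xor_polytope_not_affine in \<open>auto simp: P_half_def\<close>)
qed

end
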